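(* Let $\mathcal{C}_{h,\theta}$ be a hyperbolic cone with $\theta<\pi$. There exist $d>0$ and a cone neighbourhood $U_d$ of the cone-point with the following property: if $x,y$ are two points of $\mathcal{C}_{h,\theta}$ at distance $d$ from the cone-point, then the geodesic joining $x$ and $y$ does not intersect $U_d$.
   Context: For $\theta\in(0,2\pi)$ and $h>0$, let $\mathcal{S}_{h,\theta}=\{z\in\mathbb{D}: d_{\mathbb{D}}(0,z)\le h,\ 0\le\arg z\le\theta\}$ in the Poincaré disk. The hyperbolic cone $\mathcal{C}_{h,\theta}$ with cone-angle $\theta$ and slant height $h$ is the quotient of $\mathcal{S}_{h,\theta}$ obtained by gluing the segments $\arg z=0$ and $\arg z=\theta$ via $z\mapsto e^{i\theta}z$; the image of $0$ is the cone-point. A cone neighbourhood of the cone-point is a set of points at distance less than some $r>0$ from it. *)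

theory Defs
  imports "HOL-Analysis.Analysis"
begin

definition dD :: "complex \<Rightarrow> complex \<Rightarrow> real" where
  "dD z w = 2 * artanh (cmod (z - w) / cmod (1 - cnj z * w))"

definition sector :: "real \<Rightarrow> real \<Rightarrow> complex set" where
  "sector h \<theta> = {z. cmod z < 1 \<and> dD 0 z \<le> h \<and>
      (\<exists>\<rho> \<phi>. 0 \<le> \<rho> \<and> 0 \<le> \<phi> \<and> \<phi> \<le> \<theta> \<and> z = complex_of_real \<rho> * cis \<phi>)}"

definition cone_rel :: "real \<Rightarrow> real \<Rightarrow> (complex \<times> complex) set" where
  "cone_rel h \<theta> = {(z, w). z \<in> sector h \<theta> \<and> w \<in> sector h \<theta> \<and>
      (z = w
       \<or> (\<exists>\<rho>\<ge>0. z = complex_of_real \<rho> \<and> w = cis \<theta> * complex_of_real \<rho>)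
       \<or> (\<exists>\<rho>\<ge>0. w = complex_of_real \<rho> \<and> z = cis \<theta> * complex_of_real \<rho>))}"

definition cone :: "real \<Rightarrow> real \<Rightarrow> complex set set" where
  "cone h \<theta> = sector h \<theta> // cone_rel h \<theta>"

definition cone_point :: "real \<Rightarrow> real \<Rightarrow> complex set" where
  "cone_point h \<theta> = cone_rel h \<theta> `` {0}"

definition cone_dist :: "real \<Rightarrow> real \<Rightarrow> complex set \<Rightarrow> complex set \<Rightarrow> real" where
  "cone_dist h \<theta> p q = Inf {(\<Sum>i\<le>n. dD (x i) (y i)) | n x y.
      x 0 \<in> p \<and> y n \<in> q \<and>
      (\<forall>i\<le>n. x i \<in> sector h \<theta> \<and> y i \<in> sector h \<theta>) \<and>
      (\<forall>i<n. (y i, x (Suc i)) \<in> cone_rel h \<theta>)}"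

definition cone_geodesic :: "real \<Rightarrow> real \<Rightarrow> (real \<Rightarrow> complex set) \<Rightarrow> complex set \<Rightarrow> complex set \<Rightarrow> bool" where
  "cone_geodesic h \<theta> \<gamma> p q \<longleftrightarrow>
     \<gamma> 0 = p \<and> \<gamma> (cone_dist h \<theta> p q) = q \<and>
     (\<forall>t\<in>{0..cone_dist h \<theta> p q}. \<gamma> t \<in> cone h \<theta>) \<and>
     (\<forall>s\<in>{0..cone_dist h \<theta> p q}. \<forall>t\<in>{0..cone_dist h \<theta> p q}.
        cone_dist h \<theta> (\<gamma> s) (\<gamma> t) = \<bar>s - t\<bar>)"

end

theory Submission
  imports Defs
begin

text \<open>
  A point at cone distance d from the cone point o is the class of a sector point of modulus
  tanh (d/2), and the gluing preserves moduli.  Since the cone angle is less than pi, two such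
  points subtend an angle less than pi at the origin, so for small d their hyperbolic distance
  in the disk is at most some m < 2d, uniformly; this follows by comparing the
  pseudo-hyperbolic distance |z - w| / |1 - conj z w| with tanh d = 2 rho / (1 + rho^2).
  Conversely, no chain of the quotient metric beats the triangle inequality through o, so a
  geodesic from x to y through p has length at least d(o,x) + d(o,y) - 2 d(o,p).  As its length
  is at most m, every point p of it satisfies d(o,p) >= (2d - m)/2.
\<close>

lemma tanh_artanh_real:
  fixes x :: real
  assumes "\<bar>x\<bar> < 1"
  shows "tanh (artanh x) = x"
proof -
  have "1 + x > 0" "1 - x > 0" using assms by auto
  then have "- 2 * artanh x = ln ((1 - x) / (1 + x))"
    by (simp add: artanh_def ln_div)
  then have exp_eq: "exp (- 2 * artanh x) = (1 - x) / (1 + x)"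
    using \<open>1 + x > 0\<close> \<open>1 - x > 0\<close> by simp
  show ?thesis
    unfolding tanh_real_altdef exp_eq using \<open>1 + x > 0\<close> by (simp add: field_simps)
qed

lemma artanh_real_mono:
  fixes x y :: real
  assumes "-1 < x" "x \<le> y" "y < 1"
  shows "artanh x \<le> artanh y"
proof -
  have "\<bar>x\<bar> < 1" "\<bar>y\<bar> < 1"
    using assms by auto
  then have "tanh (artanh x) \<le> tanh (artanh y)"
    using assms(2) by (simp add: tanh_artanh_real)
  then show ?thesis
    by simp
qed

lemma tanh_add_artanh_real:
  fixes x y :: real
  assumes "\<bar>x\<bar> < 1" "\<bar>y\<bar> < 1"
  shows "tanh (artanh x + artanh y) = (x + y) / (1 + x * y)"
  using assms by (simp add: tanh_add tanh_artanh_real)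

definition pseudo_hyp_dist :: "complex \<Rightarrow> complex \<Rightarrow> real" where
  "pseudo_hyp_dist a b = cmod (a - b) / cmod (1 - cnj a * b)"

lemma dD_eq_artanh_pseudo_hyp_dist: "dD a b = 2 * artanh (pseudo_hyp_dist a b)"
  unfolding dD_def pseudo_hyp_dist_def ..

lemma pseudo_hyp_dist_0_left [simp]: "pseudo_hyp_dist 0 b = cmod b"
  unfolding pseudo_hyp_dist_def by simp

lemma pseudo_hyp_dist_nonneg: "0 \<le> pseudo_hyp_dist a b"
  unfolding pseudo_hyp_dist_def by simp

lemma norm_one_minus_cnj_mult_power2:
  "(cmod (1 - cnj a * b))\<^sup>2 = (cmod (a - b))\<^sup>2 + (1 - (cmod a)\<^sup>2) * (1 - (cmod b)\<^sup>2)"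
  by (simp only: cmod_power2) (simp add: power2_eq_square algebra_simps)

lemma norm_diff_less_norm_one_minus_cnj_mult:
  assumes "cmod a < 1" "cmod b < 1"
  shows "cmod (a - b) < cmod (1 - cnj a * b)"
proof -
  have "0 < (1 - (cmod a)\<^sup>2) * (1 - (cmod b)\<^sup>2)"
    using assms by (simp add: abs_square_less_1)
  then have "(cmod (a - b))\<^sup>2 < (cmod (1 - cnj a * b))\<^sup>2"
    using norm_one_minus_cnj_mult_power2[of a b] by linarith
  then show ?thesis
    using power2_less_imp_less by fastforce
qed

lemma pseudo_hyp_dist_less_1:
  assumes "cmod a < 1" "cmod b < 1"
  shows "pseudo_hyp_dist a b < 1"
  using norm_diff_less_norm_one_minus_cnj_mult[OF assms]
  unfolding pseudo_hyp_dist_def by (simp add: divide_less_eq_1)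

lemma tanh_half_dD:
  assumes "cmod a < 1" "cmod b < 1"
  shows "tanh (dD a b / 2) = pseudo_hyp_dist a b"
  using pseudo_hyp_dist_nonneg[of a b] pseudo_hyp_dist_less_1[OF assms]
  by (simp add: dD_eq_artanh_pseudo_hyp_dist tanh_artanh_real)

lemma dD_nonneg:
  assumes "cmod a < 1" "cmod b < 1"
  shows "0 \<le> dD a b"
proof -
  have "0 \<le> tanh (dD a b / 2)"
    using tanh_half_dD[OF assms] pseudo_hyp_dist_nonneg[of a b] by simp
  then show ?thesis by simp
qed

lemma norm_eq_if_dD_0_eq:
  assumes "cmod z < 1" "cmod w < 1" "dD 0 z = dD 0 w"
  shows "cmod z = cmod w"
  using tanh_half_dD[of 0 z] tanh_half_dD[of 0 w] assms by simp

lemma norm_one_minus_cnj_mult_self: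
  assumes "cmod a \<le> 1"
  shows "cmod (1 - cnj a * a) = 1 - (cmod a)\<^sup>2"
proof -
  have "1 - cnj a * a = of_real (1 - (cmod a)\<^sup>2)"
    by (metis complex_norm_square mult.commute of_real_1 of_real_diff)
  moreover have "(cmod a)\<^sup>2 \<le> 1"
    using assms by (simp add: abs_square_le_1)
  ultimately show ?thesis
    by (simp only: norm_of_real abs_of_nonneg diff_ge_0_iff_ge)
qed

lemma one_minus_norm_power2_le:
  assumes "cmod a \<le> 1"
  shows "1 - (cmod a)\<^sup>2 \<le> cmod (1 - cnj a * b) + cmod a * cmod (a - b)"
proof -
  have "1 - cnj a * a = (1 - cnj a * b) + cnj a * (b - a)"
    by (simp add: algebra_simps)
  then have "cmod (1 - cnj a * a) \<le> cmod (1 - cnj a * b) + cmod a * cmod (a - b)"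
    by (metis complex_mod_cnj norm_minus_commute norm_mult norm_triangle_ineq)
  then show ?thesis
    using norm_one_minus_cnj_mult_self[OF assms] by simp
qed

lemma norm_le_pseudo_hyp_dist_add:
  assumes "cmod a < 1" "cmod b < 1"
  defines "\<delta> \<equiv> pseudo_hyp_dist a b"
  shows "cmod b \<le> (cmod a + \<delta>) / (1 + cmod a * \<delta>)"
proof -
  define \<alpha> \<beta> P N where "\<alpha> = cmod a" and "\<beta> = cmod b"
    and "P = cmod (1 - cnj a * b)" and "N = cmod (a - b)"
  have bounds: "N < P" "0 \<le> N" "0 \<le> \<alpha>" "\<alpha> < 1" "0 \<le> \<beta>" "\<beta> < 1"
    using norm_diff_less_norm_one_minus_cnj_mult[OF assms(1,2)] assms
    unfolding \<alpha>_def \<beta>_def P_def N_def by auto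
  have PN: "P\<^sup>2 - N\<^sup>2 = (1 - \<alpha>\<^sup>2) * (1 - \<beta>\<^sup>2)"
    using norm_one_minus_cnj_mult_power2[of a b] unfolding \<alpha>_def \<beta>_def P_def N_def by simp
  have "1 - \<alpha>\<^sup>2 \<le> P + \<alpha> * N"
    using one_minus_norm_power2_le[of a b] assms(1) unfolding \<alpha>_def P_def N_def by simp
  then have "(1 - \<alpha>\<^sup>2)\<^sup>2 * (1 - \<beta>\<^sup>2) \<le> (P + \<alpha> * N)\<^sup>2 * (1 - \<beta>\<^sup>2)"
    using bounds by (intro mult_right_mono power_mono) (auto simp: abs_square_le_1)
  moreover have "(\<alpha> * P + N)\<^sup>2 = (P + \<alpha> * N)\<^sup>2 - (1 - \<alpha>\<^sup>2) * (P\<^sup>2 - N\<^sup>2)"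
    by (simp add: power2_eq_square algebra_simps)
  then have "(\<alpha> * P + N)\<^sup>2 = (P + \<alpha> * N)\<^sup>2 - (1 - \<alpha>\<^sup>2)\<^sup>2 * (1 - \<beta>\<^sup>2)"
    unfolding PN by (simp add: power2_eq_square mult.assoc)
  moreover have "(P + \<alpha> * N)\<^sup>2 * (1 - \<beta>\<^sup>2) = (P + \<alpha> * N)\<^sup>2 - (\<beta> * (P + \<alpha> * N))\<^sup>2"
    by (simp only: power_mult_distrib) (simp add: algebra_simps)
  ultimately have "(\<beta> * (P + \<alpha> * N))\<^sup>2 \<le> (\<alpha> * P + N)\<^sup>2"
    by linarith
  then have "\<beta> * (P + \<alpha> * N) \<le> \<alpha> * P + N"
    by (rule power2_le_imp_le) (use bounds in simp)
  then have "\<beta> \<le> (\<alpha> * P + N) / (P + \<alpha> * N)"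
    using bounds by (simp add: pos_le_divide_eq add_pos_nonneg)
  also have "\<dots> = (\<alpha> + N / P) / (1 + \<alpha> * (N / P))"
    using bounds by (simp add: divide_simps)
  finally show ?thesis
    unfolding \<delta>_def pseudo_hyp_dist_def \<alpha>_def \<beta>_def P_def N_def .
qed

lemma dD_0_triangle:
  assumes "cmod a < 1" "cmod b < 1"
  shows "dD 0 b \<le> dD 0 a + dD a b"
proof -
  define \<delta> where "\<delta> = pseudo_hyp_dist a b"
  have \<delta>: "0 \<le> \<delta>" "\<delta> < 1"
    unfolding \<delta>_def using pseudo_hyp_dist_nonneg pseudo_hyp_dist_less_1[OF assms] by auto
  have "tanh ((dD 0 a + dD a b) / 2) = tanh (artanh (cmod a) + artanh \<delta>)"
    by (simp add: dD_eq_artanh_pseudo_hyp_dist \<delta>_def add_divide_distrib)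
  also have "\<dots> = (cmod a + \<delta>) / (1 + cmod a * \<delta>)"
    using assms \<delta> by (simp add: tanh_add_artanh_real)
  also have "\<dots> \<ge> tanh (dD 0 b / 2)"
    using tanh_half_dD[of 0 b] norm_le_pseudo_hyp_dist_add[OF assms] assms
    unfolding \<delta>_def by simp
  finally show ?thesis by simp
qed

lemma norm_cis_diff_power2: "(cmod (cis a - cis b))\<^sup>2 = 2 - 2 * cos (a - b)"
  by (simp add: cmod_power2 cos_diff power2_diff algebra_simps)

lemma sector_norm_less_1: "z \<in> sector h \<theta> \<Longrightarrow> cmod z < 1"
  unfolding sector_def by auto

lemma sector_polar:
  assumes "z \<in> sector h \<theta>"
  obtains \<phi> where "0 \<le> \<phi>" "\<phi> \<le> \<theta>" "z = of_real (cmod z) * cis \<phi>"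
  using assms unfolding sector_def by (auto simp: norm_mult)

lemma zero_in_sector: "0 \<le> h \<Longrightarrow> 0 \<le> \<theta> \<Longrightarrow> 0 \<in> sector h \<theta>"
  unfolding sector_def by (auto simp: dD_def intro!: exI[of _ 0])

lemma of_real_in_sector:
  assumes "0 \<le> \<rho>" "\<rho> \<le> tanh (h / 2)" "0 \<le> \<theta>"
  shows "of_real \<rho> \<in> sector h \<theta>"
proof -
  have "\<rho> < 1"
    using assms(2) tanh_real_lt_1[of "h / 2"] by linarith
  then have "tanh (dD 0 (of_real \<rho>) / 2) \<le> tanh (h / 2)"
    using assms(1,2) tanh_half_dD[of 0 "of_real \<rho>"] by simp
  then have "dD 0 (of_real \<rho>) \<le> h"
    by simp
  moreover have "of_real \<rho> = of_real \<rho> * cis 0"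
    by simp
  ultimately show ?thesis
    unfolding sector_def mem_Collect_eq using assms(1,3) \<open>\<rho> < 1\<close>
    by (intro conjI exI[of _ \<rho>] exI[of _ 0]) auto
qed

lemma pseudo_hyp_dist_sector_circle_power2_le:
  assumes "\<theta> \<le> pi" "z \<in> sector h \<theta>" "w \<in> sector h \<theta>" "cmod z = \<rho>" "cmod w = \<rho>" "\<rho> < 1"
  shows "(pseudo_hyp_dist z w)\<^sup>2 \<le> 2 * \<rho>\<^sup>2 * (1 - cos \<theta>) / (1 - \<rho>\<^sup>2)\<^sup>2"
proof -
  obtain a b where "0 \<le> a" "a \<le> \<theta>" "0 \<le> b" "b \<le> \<theta>"
    and zw: "z = of_real \<rho> * cis a" "w = of_real \<rho> * cis b"
    using sector_polar[OF assms(2)] sector_polar[OF assms(3)] assms(4,5) by metis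
  have "cos \<theta> \<le> cos \<bar>a - b\<bar>"
    using \<open>0 \<le> a\<close> \<open>a \<le> \<theta>\<close> \<open>0 \<le> b\<close> \<open>b \<le> \<theta>\<close> assms(1) by (intro cos_monotone_0_pi_le) auto
  then have "\<rho>\<^sup>2 * cos \<theta> \<le> \<rho>\<^sup>2 * cos (a - b)"
    by (simp add: mult_left_mono)
  moreover have "(cmod (z - w))\<^sup>2 = \<rho>\<^sup>2 * (2 - 2 * cos (a - b))"
    unfolding zw by (simp flip: right_diff_distrib add: norm_mult power_mult_distrib norm_cis_diff_power2)
  ultimately have num: "(cmod (z - w))\<^sup>2 \<le> 2 * \<rho>\<^sup>2 * (1 - cos \<theta>)"
    by (simp add: algebra_simps)
  have den: "(1 - \<rho>\<^sup>2)\<^sup>2 \<le> (cmod (1 - cnj z * w))\<^sup>2"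
    using norm_one_minus_cnj_mult_power2[of z w] assms(4,5) by (simp add: power2_eq_square)
  have "\<rho>\<^sup>2 < 1"
    using assms(4,6) norm_ge_zero[of z] by (simp add: power_less_one_iff)
  then have "0 < (1 - \<rho>\<^sup>2)\<^sup>2"
    by simp
  with num den show ?thesis
    unfolding pseudo_hyp_dist_def power_divide by (intro frac_le) auto
qed

text \<open>For c = cos theta the left side is the bound of the previous lemma, and the right side is
  (tanh (dD 0 rho))^2; the factor 1/16 is a convenient, not a sharp, smallness condition.\<close>

lemma small_radius_chord_bound:
  fixes c \<rho> :: real
  assumes "c \<le> 1" "0 < \<rho>" "\<rho>\<^sup>2 \<le> (1 + c) / 16"
  shows "2 * \<rho>\<^sup>2 * (1 - c) / (1 - \<rho>\<^sup>2)\<^sup>2 < (2 * \<rho> / (1 + \<rho>\<^sup>2))\<^sup>2"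
proof -
  define e where "e = \<rho>\<^sup>2"
  have e: "0 < e" "e \<le> (1 + c) / 16" "e < 1"
    using assms unfolding e_def by auto
  define X Y where "X = e * (6 - 2 * c)" and "Y = e\<^sup>2 * (1 + c)"
  have "2 * (1 - e)\<^sup>2 - (1 - c) * (1 + e)\<^sup>2 = (1 + c) - X + Y"
    unfolding X_def Y_def by (simp add: power2_eq_square algebra_simps)
  moreover have "X \<le> e * 8"
    unfolding X_def using assms e by (intro mult_left_mono) auto
  moreover have "0 \<le> Y"
    unfolding Y_def using e by simp
  ultimately have "(1 - c) * (1 + e)\<^sup>2 < 2 * (1 - e)\<^sup>2"
    using e by argo
  then have "2 * e * ((1 - c) * (1 + e)\<^sup>2) < 2 * e * (2 * (1 - e)\<^sup>2)"
    using e by simp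
  then have "2 * e * (1 - c) / (1 - e)\<^sup>2 < 4 * e / (1 + e)\<^sup>2"
    using e by (simp add: divide_simps algebra_simps)
  then show ?thesis
    unfolding e_def by (simp add: power_divide power_mult_distrib)
qed

lemma tanh_dD_0_of_real:
  assumes "0 \<le> \<rho>" "\<rho> < 1"
  shows "tanh (dD 0 (of_real \<rho>)) = 2 * \<rho> / (1 + \<rho>\<^sup>2)"
proof -
  have "dD 0 (of_real \<rho>) = artanh \<rho> + artanh \<rho>"
    using assms(1) by (simp add: dD_eq_artanh_pseudo_hyp_dist)
  then show ?thesis
    using tanh_add_artanh_real[of \<rho> \<rho>] assms by (simp add: power2_eq_square)
qed

lemma sector_circle_dD_bound:
  assumes "\<theta> \<le> pi" "0 < \<rho>" "\<rho>\<^sup>2 \<le> (1 + cos \<theta>) / 16"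
  shows "\<exists>m < 2 * dD 0 (of_real \<rho>). \<forall>z\<in>sector h \<theta>. \<forall>w\<in>sector h \<theta>.
           cmod z = \<rho> \<longrightarrow> cmod w = \<rho> \<longrightarrow> dD z w \<le> m"
proof -
  define K where "K = 2 * \<rho>\<^sup>2 * (1 - cos \<theta>) / (1 - \<rho>\<^sup>2)\<^sup>2"
  define T where "T = tanh (dD 0 (of_real \<rho>))"
  have "\<rho>\<^sup>2 < 1"
    using assms(3) cos_le_one[of \<theta>] by argo
  then have "\<rho> < 1"
    using assms(2) by (simp add: power_less_one_iff)
  then have T_eq: "T = 2 * \<rho> / (1 + \<rho>\<^sup>2)"
    unfolding T_def using assms(2) by (intro tanh_dD_0_of_real) simp_all
  have "K < T\<^sup>2"
    unfolding K_def T_eq using assms by (intro small_radius_chord_bound) auto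
  moreover have "0 \<le> K"
    unfolding K_def by simp
  moreover have "0 < T"
    unfolding T_eq using assms(2) by (simp add: add_pos_nonneg)
  moreover have "T < 1"
    unfolding T_def by (rule tanh_real_lt_1)
  ultimately have "0 \<le> sqrt K" "sqrt K < T"
    by (auto simp: real_less_lsqrt)
  with \<open>T < 1\<close> have K: "0 \<le> sqrt K" "sqrt K < T" "sqrt K < 1"
    by linarith+
  show ?thesis
  proof (intro exI conjI ballI impI)
    have "tanh (artanh (sqrt K)) = sqrt K"
      using K by (intro tanh_artanh_real) auto
    then have "tanh (artanh (sqrt K)) < tanh (dD 0 (of_real \<rho>))"
      using K unfolding T_def by simp
    then show "2 * artanh (sqrt K) < 2 * dD 0 (of_real \<rho>)"
      by simp
  next
    fix z w assume zw: "z \<in> sector h \<theta>" "w \<in> sector h \<theta>" "cmod z = \<rho>" "cmod w = \<rho>"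
    have "(pseudo_hyp_dist z w)\<^sup>2 \<le> K"
      unfolding K_def using assms(1) zw \<open>\<rho> < 1\<close> by (rule pseudo_hyp_dist_sector_circle_power2_le)
    then have "pseudo_hyp_dist z w \<le> sqrt K"
      by (rule real_le_rsqrt)
    then have "artanh (pseudo_hyp_dist z w) \<le> artanh (sqrt K)"
      using K pseudo_hyp_dist_nonneg[of z w] by (intro artanh_real_mono) auto
    then show "dD z w \<le> 2 * artanh (sqrt K)"
      by (simp add: dD_eq_artanh_pseudo_hyp_dist)
  qed
qed

lemma sector_circle_marginE:
  assumes "0 < h" "0 < \<theta>" "\<theta> < pi"
  obtains d m where "0 < d" "m < 2 * d" "\<exists>z\<in>sector h \<theta>. dD 0 z = d"
    "\<And>z w. z \<in> sector h \<theta> \<Longrightarrow> w \<in> sector h \<theta> \<Longrightarrow> dD 0 z = d \<Longrightarrow> dD 0 w = d \<Longrightarrow> dD z w \<le> m"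
proof -
  define \<rho> where "\<rho> = min ((1 + cos \<theta>) / 16) (tanh (h / 2))"
  have "cos pi < cos \<theta>"
    using assms(2,3) by (intro cos_monotone_0_pi) auto
  then have \<rho>: "0 < \<rho>" "\<rho> \<le> tanh (h / 2)" "\<rho> \<le> (1 + cos \<theta>) / 16" "\<rho> < 1"
    using assms(1) tanh_real_lt_1[of "h / 2"] unfolding \<rho>_def by (auto simp: min_def)
  then have "\<rho>\<^sup>2 \<le> (1 + cos \<theta>) / 16"
    by (metis order.trans less_eq_real_def mult_left_le_one_le power2_eq_square)
  then obtain m where "m < 2 * dD 0 (of_real \<rho>)" and margin: "\<forall>z\<in>sector h \<theta>. \<forall>w\<in>sector h \<theta>.
      cmod z = \<rho> \<longrightarrow> cmod w = \<rho> \<longrightarrow> dD z w \<le> m"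
    using sector_circle_dD_bound[of \<theta> \<rho> h] \<rho>(1) assms(3) by auto
  have "0 < tanh (dD 0 (of_real \<rho>) / 2)"
    using tanh_half_dD[of 0 "of_real \<rho>"] \<rho> by simp
  then have "0 < dD 0 (of_real \<rho>)"
    by simp
  moreover have "of_real \<rho> \<in> sector h \<theta>"
    using \<rho> assms(2) by (intro of_real_in_sector) auto
  moreover have "cmod z = \<rho>" if "z \<in> sector h \<theta>" "dD 0 z = dD 0 (of_real \<rho>)" for z
    using norm_eq_if_dD_0_eq[OF sector_norm_less_1[OF that(1)] _ that(2)] \<rho> by simp
  ultimately show ?thesis
    using that[of "dD 0 (of_real \<rho>)" m] \<open>m < _\<close> margin by blast
qed

lemma cone_rel_norm_eq: "(a, b) \<in> cone_rel h \<theta> \<Longrightarrow> cmod a = cmod b"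
  unfolding cone_rel_def by (auto simp: norm_mult)

lemma cone_rel_refl_on_sector: "a \<in> sector h \<theta> \<Longrightarrow> (a, a) \<in> cone_rel h \<theta>"
  unfolding cone_rel_def by auto

definition cone_chain_lengths :: "real \<Rightarrow> real \<Rightarrow> complex set \<Rightarrow> complex set \<Rightarrow> real set" where
  "cone_chain_lengths h \<theta> p q = {(\<Sum>i\<le>n. dD (x i) (y i)) | n x y.
      x 0 \<in> p \<and> y n \<in> q \<and>
      (\<forall>i\<le>n. x i \<in> sector h \<theta> \<and> y i \<in> sector h \<theta>) \<and>
      (\<forall>i<n. (y i, x (Suc i)) \<in> cone_rel h \<theta>)}"

lemma cone_dist_eq_Inf_chain_lengths: "cone_dist h \<theta> p q = Inf (cone_chain_lengths h \<theta> p q)"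
  unfolding cone_dist_def cone_chain_lengths_def ..

lemma dD_in_cone_chain_lengths:
  assumes "a \<in> p" "b \<in> q" "a \<in> sector h \<theta>" "b \<in> sector h \<theta>"
  shows "dD a b \<in> cone_chain_lengths h \<theta> p q"
  unfolding cone_chain_lengths_def
  using assms by (intro CollectI exI[of _ 0] exI[of _ "\<lambda>_. a"] exI[of _ "\<lambda>_. b"]) auto

lemma dD_0_le_chain_length:
  assumes "\<forall>i\<le>n. x i \<in> sector h \<theta> \<and> y i \<in> sector h \<theta>"
    and "\<forall>i<n. (y i, x (Suc i)) \<in> cone_rel h \<theta>"
  shows "dD 0 (y n) \<le> dD 0 (x 0) + (\<Sum>i\<le>n. dD (x i) (y i))"
  using assms
proof (induction n)
  case 0
  then show ?case
    using dD_0_triangle[OF sector_norm_less_1 sector_norm_less_1] by auto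
next
  case (Suc n)
  then have "dD 0 (y n) \<le> dD 0 (x 0) + (\<Sum>i\<le>n. dD (x i) (y i))"
    by auto
  moreover have "cmod (y n) = cmod (x (Suc n))"
    using Suc.prems(2) cone_rel_norm_eq by blast
  then have "dD 0 (y n) = dD 0 (x (Suc n))"
    by (simp add: dD_def)
  moreover have "dD 0 (y (Suc n)) \<le> dD 0 (x (Suc n)) + dD (x (Suc n)) (y (Suc n))"
    using Suc.prems(1) by (intro dD_0_triangle sector_norm_less_1) auto
  ultimately show ?case
    by simp
qed

lemma cone_chain_lengths_bdd_below: "bdd_below (cone_chain_lengths h \<theta> p q)"
  unfolding cone_chain_lengths_def
  by (rule bdd_belowI[of _ 0]) (auto intro!: sum_nonneg dD_nonneg sector_norm_less_1)

lemma cone_dist_le_dD: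
  assumes "a \<in> p" "b \<in> q" "a \<in> sector h \<theta>" "b \<in> sector h \<theta>"
  shows "cone_dist h \<theta> p q \<le> dD a b"
  unfolding cone_dist_eq_Inf_chain_lengths
  using dD_in_cone_chain_lengths[OF assms] cone_chain_lengths_bdd_below by (rule cInf_lower)

lemma dD_0_diff_le_cone_dist:
  assumes "u \<in> sector h \<theta>" "v \<in> sector h \<theta>"
  shows "dD 0 v - dD 0 u \<le> cone_dist h \<theta> (cone_rel h \<theta> `` {u}) (cone_rel h \<theta> `` {v})"
  unfolding cone_dist_eq_Inf_chain_lengths
proof (rule cInf_greatest)
  have "dD u v \<in> cone_chain_lengths h \<theta> (cone_rel h \<theta> `` {u}) (cone_rel h \<theta> `` {v})"
    using assms cone_rel_refl_on_sector by (intro dD_in_cone_chain_lengths) auto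
  then show "cone_chain_lengths h \<theta> (cone_rel h \<theta> `` {u}) (cone_rel h \<theta> `` {v}) \<noteq> {}"
    by blast
next
  fix s assume "s \<in> cone_chain_lengths h \<theta> (cone_rel h \<theta> `` {u}) (cone_rel h \<theta> `` {v})"
  then obtain n x y where s: "s = (\<Sum>i\<le>n. dD (x i) (y i))"
    and ends: "(u, x 0) \<in> cone_rel h \<theta>" "(v, y n) \<in> cone_rel h \<theta>"
    and chain: "\<forall>i\<le>n. x i \<in> sector h \<theta> \<and> y i \<in> sector h \<theta>"
      "\<forall>i<n. (y i, x (Suc i)) \<in> cone_rel h \<theta>"
    unfolding cone_chain_lengths_def Image_singleton_iff by blast
  have "cmod (x 0) = cmod u" "cmod (y n) = cmod v"
    using cone_rel_norm_eq[OF ends(1)] cone_rel_norm_eq[OF ends(2)] by simp_all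
  then have "dD 0 (x 0) = dD 0 u" "dD 0 (y n) = dD 0 v"
    by (simp_all add: dD_def)
  then show "dD 0 v - dD 0 u \<le> s"
    using dD_0_le_chain_length[OF chain] s by simp
qed

lemma cone_dist_cone_point:
  assumes "0 \<le> h" "0 \<le> \<theta>" "u \<in> sector h \<theta>"
  shows "cone_dist h \<theta> (cone_point h \<theta>) (cone_rel h \<theta> `` {u}) = dD 0 u"
proof (rule antisym)
  show "cone_dist h \<theta> (cone_point h \<theta>) (cone_rel h \<theta> `` {u}) \<le> dD 0 u"
    unfolding cone_point_def using assms zero_in_sector cone_rel_refl_on_sector
    by (intro cone_dist_le_dD) auto
  show "dD 0 u \<le> cone_dist h \<theta> (cone_point h \<theta>) (cone_rel h \<theta> `` {u})"
    unfolding cone_point_def using dD_0_diff_le_cone_dist[OF zero_in_sector[OF assms(1,2)] assms(3)]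
    by (simp add: dD_def)
qed

lemma cone_representativeE:
  assumes "0 \<le> h" "0 \<le> \<theta>" "p \<in> cone h \<theta>"
  obtains u where "u \<in> sector h \<theta>" "p = cone_rel h \<theta> `` {u}"
    "cone_dist h \<theta> (cone_point h \<theta>) p = dD 0 u"
  using assms(3) cone_dist_cone_point[OF assms(1,2)] unfolding cone_def
  by (metis quotientE)

text \<open>The left side is twice the Gromov product of the endpoints at the cone point.\<close>

lemma cone_geodesic_dist_cone_point_ge:
  assumes "0 \<le> h" "0 \<le> \<theta>" "z \<in> sector h \<theta>" "w \<in> sector h \<theta>"
    and geo: "cone_geodesic h \<theta> \<gamma> (cone_rel h \<theta> `` {z}) (cone_rel h \<theta> `` {w})"
    and t: "t \<in> {0..cone_dist h \<theta> (cone_rel h \<theta> `` {z}) (cone_rel h \<theta> `` {w})}"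
  shows "dD 0 z + dD 0 w - dD z w \<le> 2 * cone_dist h \<theta> (cone_point h \<theta>) (\<gamma> t)"
proof -
  define L where "L = cone_dist h \<theta> (cone_rel h \<theta> `` {z}) (cone_rel h \<theta> `` {w})"
  have ends: "\<gamma> 0 = cone_rel h \<theta> `` {z}" "\<gamma> L = cone_rel h \<theta> `` {w}"
    and "\<gamma> t \<in> cone h \<theta>"
    and isometric: "\<And>s s'. s \<in> {0..L} \<Longrightarrow> s' \<in> {0..L} \<Longrightarrow> cone_dist h \<theta> (\<gamma> s) (\<gamma> s') = \<bar>s - s'\<bar>"
    using geo t unfolding cone_geodesic_def L_def by auto
  then obtain u where u: "u \<in> sector h \<theta>" "\<gamma> t = cone_rel h \<theta> `` {u}"
    "cone_dist h \<theta> (cone_point h \<theta>) (\<gamma> t) = dD 0 u"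
    using cone_representativeE assms(1,2) by blast
  have t: "0 \<le> t" "t \<le> L"
    using t unfolding L_def by auto
  have "dD 0 z - dD 0 u \<le> t"
    using dD_0_diff_le_cone_dist[OF u(1) assms(3)] isometric[of t 0] t ends u(2) by simp
  moreover have "dD 0 w - dD 0 u \<le> L - t"
    using dD_0_diff_le_cone_dist[OF u(1) assms(4)] isometric[of t L] t ends u(2) by simp
  moreover have "L \<le> dD z w"
    unfolding L_def using assms(3,4) cone_rel_refl_on_sector by (intro cone_dist_le_dD) auto
  ultimately show ?thesis
    using u(3) by linarith
qed

lemma cone_geodesic_between_circle_points:
  assumes "0 \<le> h" "0 \<le> \<theta>"
    and margin: "\<And>z w. z \<in> sector h \<theta> \<Longrightarrow> w \<in> sector h \<theta> \<Longrightarrow> dD 0 z = d \<Longrightarrow> dD 0 w = d \<Longrightarrow> dD z w \<le> m"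
    and "x \<in> cone h \<theta>" "y \<in> cone h \<theta>"
    and "cone_dist h \<theta> (cone_point h \<theta>) x = d" "cone_dist h \<theta> (cone_point h \<theta>) y = d"
    and "cone_geodesic h \<theta> \<gamma> x y" "t \<in> {0..cone_dist h \<theta> x y}"
  shows "2 * d - m \<le> 2 * cone_dist h \<theta> (cone_point h \<theta>) (\<gamma> t)"
proof -
  obtain z where z: "z \<in> sector h \<theta>" "x = cone_rel h \<theta> `` {z}" "dD 0 z = d"
    using cone_representativeE[OF assms(1,2,4)] assms(6) by metis
  obtain w where w: "w \<in> sector h \<theta>" "y = cone_rel h \<theta> `` {w}" "dD 0 w = d"
    using cone_representativeE[OF assms(1,2,5)] assms(7) by metis
  have "dD 0 z + dD 0 w - dD z w \<le> 2 * cone_dist h \<theta> (cone_point h \<theta>) (\<gamma> t)"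
    using assms(8,9) unfolding z(2) w(2)
    by (rule cone_geodesic_dist_cone_point_ge[OF assms(1,2) z(1) w(1)])
  then show ?thesis
    using margin[OF z(1) w(1) z(3) w(3)] z(3) w(3) by linarith
qed

theorem lemma2p8:
  fixes h \<theta> :: real
  assumes "0 < h" and "0 < \<theta>" and "\<theta> < pi"
  shows "\<exists>d>0. \<exists>r>0.
     (\<exists>x\<in>cone h \<theta>. cone_dist h \<theta> (cone_point h \<theta>) x = d) \<and>
     (\<forall>x\<in>cone h \<theta>. \<forall>y\<in>cone h \<theta>.
        cone_dist h \<theta> (cone_point h \<theta>) x = d \<and> cone_dist h \<theta> (cone_point h \<theta>) y = d \<longrightarrow>
        (\<forall>\<gamma>. cone_geodesic h \<theta> \<gamma> x y \<longrightarrow>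
           (\<forall>t\<in>{0..cone_dist h \<theta> x y}. \<gamma> t \<notin> {p\<in>cone h \<theta>. cone_dist h \<theta> (cone_point h \<theta>) p < r})))"
proof -
  have "0 \<le> h" "0 \<le> \<theta>"
    using assms by auto
  obtain d m where "0 < d" "m < 2 * d" and "\<exists>z\<in>sector h \<theta>. dD 0 z = d"
    and margin: "\<And>z w. z \<in> sector h \<theta> \<Longrightarrow> w \<in> sector h \<theta> \<Longrightarrow> dD 0 z = d \<Longrightarrow> dD 0 w = d \<Longrightarrow> dD z w \<le> m"
    using sector_circle_marginE[OF assms] by metis
  show ?thesis
  proof (intro exI conjI ballI allI impI)
    show "0 < d" "0 < (2 * d - m) / 4"
      using \<open>0 < d\<close> \<open>m < 2 * d\<close> by auto
    show "\<exists>x\<in>cone h \<theta>. cone_dist h \<theta> (cone_point h \<theta>) x = d"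
      using \<open>\<exists>z\<in>sector h \<theta>. dD 0 z = d\<close> cone_dist_cone_point[OF \<open>0 \<le> h\<close> \<open>0 \<le> \<theta>\<close>]
      unfolding cone_def by (metis quotientI)
  next
    fix x y \<gamma> t
    assume "x \<in> cone h \<theta>" "y \<in> cone h \<theta>"
      and "cone_dist h \<theta> (cone_point h \<theta>) x = d \<and> cone_dist h \<theta> (cone_point h \<theta>) y = d"
      and "cone_geodesic h \<theta> \<gamma> x y" "t \<in> {0..cone_dist h \<theta> x y}"
    then have "2 * d - m \<le> 2 * cone_dist h \<theta> (cone_point h \<theta>) (\<gamma> t)"
      by (intro cone_geodesic_between_circle_points[OF \<open>0 \<le> h\<close> \<open>0 \<le> \<theta>\<close> margin]) auto
    then show "\<gamma> t \<notin> {p \<in> cone h \<theta>. cone_dist h \<theta> (cone_point h \<theta>) p < (2 * d - m) / 4}"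
      using \<open>m < 2 * d\<close> by auto
  qed
qed

end
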